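(* Let $p$ be a prime and $n,k$ natural numbers with $n+1<p$ and $k<p$. Let $(A,+,\circ)$ be a strongly nilpotent brace of cardinality $p^n$ with nilpotency index $k$. Let $\gamma$ be a primitive root modulo $p^p$, $\xi=\gamma^{p^{p-1}}$, and define $a\cdot b=\sum_{i=0}^{p-2}\xi^{p-1-i}((\xi^i a)*b)$ for $a,b\in A$. Then $(a+b)\cdot c=a\cdot c+b\cdot c$ and $a\cdot(b+c)=a\cdot b+a\cdot c$ for all $a,b,c\in A$.
   Context: A (left) brace is a set $A$ with binary operations $+,\circ$ such that $(A,+)$ is an abelian group, $(A,\circ)$ is a group, and $a\circ(b+c)+a=a\circ b+a\circ c$ for all $a,b,c$. Write $a*b=a\circ b-a-b$. For additive subgroups $X,Y$, $X*Y$ is the additive subgroup generated by all $x*y$. Set $A^{[1]}=A$, $A^{[i+1]}=\sum_{j=1}^{i}A^{[j]}*A^{[i+1-j]}$. The brace is strongly nilpotent if $A^{[m]}=0$ for some $m$ and has nilpotency index $k$ if $A^{[k]}=0\neq A^{[k-1]}$. For an integer $m$ and $a\in A$, $ma$ denotes the $m$-fold additive multiple (so $\xi^i a$ is the sum of $\xi^i$ copies of $a$). *)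

theory Defs
  imports Main "HOL-Number_Theory.Number_Theory"
begin

definition is_brace :: "('a::ab_group_add \<Rightarrow> 'a \<Rightarrow> 'a) \<Rightarrow> bool" where
  "is_brace circ \<longleftrightarrow>
     (\<forall>a b c. circ (circ a b) c = circ a (circ b c)) \<and>
     (\<exists>e. (\<forall>a. circ e a = a \<and> circ a e = a) \<and> (\<forall>a. \<exists>b. circ a b = e \<and> circ b a = e)) \<and>
     (\<forall>a b c. circ a (b + c) + a = circ a b + circ a c)"

definition bstar :: "('a::ab_group_add \<Rightarrow> 'a \<Rightarrow> 'a) \<Rightarrow> 'a \<Rightarrow> 'a \<Rightarrow> 'a" where
  "bstar circ a b = circ a b - a - b"

definition add_subgroup :: "'a::ab_group_add set \<Rightarrow> bool" where
  "add_subgroup H \<longleftrightarrow> 0 \<in> H \<and> (\<forall>x\<in>H. \<forall>y\<in>H. x + y \<in> H) \<and> (\<forall>x\<in>H. - x \<in> H)"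

definition add_gen :: "'a::ab_group_add set \<Rightarrow> 'a set" where
  "add_gen S = \<Inter>{H. add_subgroup H \<and> S \<subseteq> H}"

definition bprod :: "('a::ab_group_add \<Rightarrow> 'a \<Rightarrow> 'a) \<Rightarrow> 'a set \<Rightarrow> 'a set \<Rightarrow> 'a set" where
  "bprod circ X Y = add_gen {bstar circ x y | x y. x \<in> X \<and> y \<in> Y}"

text \<open>A^[i]; the index 0 is unused (set to the whole brace). A^[1] = A and
  A^[m+1] = sum_{j=1}^{m} A^[j] * A^[m+1-j] (sum of subgroups = subgroup generated by the union).\<close>
function bpow :: "('a::ab_group_add \<Rightarrow> 'a \<Rightarrow> 'a) \<Rightarrow> nat \<Rightarrow> 'a set" where
  "bpow circ 0 = UNIV"
| "bpow circ (Suc 0) = UNIV"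
| "bpow circ (Suc (Suc m)) =
     add_gen (\<Union>j\<in>{1..Suc m}. bprod circ (bpow circ j) (bpow circ (Suc (Suc m) - j)))"
  by pat_completeness auto
termination
  by (relation "measure (\<lambda>(c, i). i)") auto

definition strongly_nilpotent :: "('a::ab_group_add \<Rightarrow> 'a \<Rightarrow> 'a) \<Rightarrow> bool" where
  "strongly_nilpotent circ \<longleftrightarrow> (\<exists>m\<ge>1. bpow circ m = {0})"

definition nilpotency_index :: "('a::ab_group_add \<Rightarrow> 'a \<Rightarrow> 'a) \<Rightarrow> nat \<Rightarrow> bool" where
  "nilpotency_index circ k \<longleftrightarrow> k \<ge> 1 \<and> bpow circ k = {0} \<and> (k \<ge> 2 \<longrightarrow> bpow circ (k - 1) \<noteq> {0})"

fun nmul :: "nat \<Rightarrow> 'a::ab_group_add \<Rightarrow> 'a" where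
  "nmul 0 a = 0"
| "nmul (Suc m) a = a + nmul m a"

definition bdot :: "('a::ab_group_add \<Rightarrow> 'a \<Rightarrow> 'a) \<Rightarrow> nat \<Rightarrow> nat \<Rightarrow> 'a \<Rightarrow> 'a \<Rightarrow> 'a" where
  "bdot circ p \<xi> a b = (\<Sum>i = 0..p - 2. nmul (\<xi> ^ (p - 1 - i)) (bstar circ (nmul (\<xi> ^ i) a) b))"

end

theory Submission
  imports Defs "HOL-Computational_Algebra.Polynomial"
begin

text \<open>
  In a brace, translation by \<open>x\<close> is left multiplication by \<open>x\<close> composed with the additive map
  \<open>b \<mapsto> b + x' \<star> b\<close>, \<open>x'\<close> the inverse of \<open>x\<close>. Consequently an \<open>m\<close>-fold finite difference of
  \<open>a \<mapsto> a \<star> c\<close> lies in \<open>A\<^bsup>[m+1]\<^esup>\<close>, all \<open>k\<close>-fold differences vanish, and Newton's forward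
  difference formula expands \<open>(M (a + b)) \<star> c - (M a) \<star> c - (M b) \<star> c\<close> as a combination of
  mixed differences \<open>c i j\<close> (\<open>i, j \<ge> 1\<close>, \<open>i + j < k\<close>) with coefficients
  \<open>(M choose i) * (M choose j)\<close>. In \<open>(a + b) \<cdot> c\<close> the multiplier \<open>M\<close> runs over \<open>\<xi> ^ s\<close> with
  weight \<open>\<xi> ^ (p - 1 - s)\<close>, so \<open>c i j\<close> gets the coefficient
  \<open>\<Sum>s. \<xi> ^ (p - 1 - s) * (\<xi> ^ s choose i) * (\<xi> ^ s choose j)\<close>. Now
  \<open>i! j! (x choose i) (x choose j)\<close> is an integer polynomial of degree \<open>\<le> p - 2\<close> divisible by
  \<open>x ^ 2\<close>, and \<open>\<xi>\<close> has order \<open>p - 1\<close> modulo \<open>p ^ p\<close> while \<open>\<xi> ^ e \<noteq> 1\<close> modulo \<open>p\<close> for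
  \<open>0 < e < p - 1\<close>; so each monomial contributes a geometric sum divisible by \<open>p ^ p\<close>, hence by
  \<open>|A| = p ^ n\<close>. Additivity in the second argument is left distributivity of \<open>\<star>\<close>.
\<close>

section \<open>A weighted power sum modulo \<open>p ^ p\<close>\<close>

lemma int_prime_power_dvd_power_sub_one:
  fixes z :: int
  assumes "int p dvd z - 1"
  shows "int p ^ Suc r dvd z ^ p ^ r - 1"
proof (induction r)
  case 0
  then show ?case using assms by simp
next
  case (Suc r)
  define y where "y = z ^ p ^ r"
  have "int p dvd y - 1"
    using Suc.IH unfolding y_def by (meson dvd_trans dvd_power zero_less_Suc)
  then have "int p dvd y ^ i - 1" for i
    by (simp add: power_diff_1_eq)
  then have "int p dvd (\<Sum>i<p. y ^ i - 1) + int p"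
    by (intro dvd_add dvd_sum) auto
  then have "int p dvd (\<Sum>i<p. y ^ i)"
    by (simp add: sum_subtractf)
  moreover have "y ^ p - 1 = (y - 1) * (\<Sum>i<p. y ^ i)"
    by (rule power_diff_1_eq)
  moreover have "z ^ p ^ Suc r = y ^ p"
    by (simp add: y_def mult.commute flip: power_mult)
  ultimately show ?case
    using Suc.IH unfolding y_def by (metis mult_dvd_mono power_Suc2)
qed

lemma primroot_geometric_sum_dvd:
  fixes p \<gamma> e :: nat
  assumes p: "prime p" and \<gamma>: "residue_primroot (p ^ p) \<gamma>" and e: "0 < e" "e < p - 1"
  shows "int (p ^ p) dvd (\<Sum>s<p - 1. (int (\<gamma> ^ p ^ (p - 1)) ^ e) ^ s)"
proof -
  define y where "y = \<gamma> ^ (p ^ (p - 1) * e)"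
  have p1: "p > 1" using p prime_gt_1_nat by blast
  have ord: "ord (p ^ p) \<gamma> = p ^ (p - 1) * (p - 1)"
    using \<gamma> totient_prime_power[of p p] p p1 by (simp add: residue_primroot_def)
  have "[y ^ (p - 1) = 1] (mod p ^ p)"
    unfolding ord_divides ord y_def power_mult[symmetric] by simp
  then have "int (p ^ p) dvd int y ^ (p - 1) - 1"
    by (simp add: cong_iff_dvd_diff flip: cong_int_iff)
  moreover have "int y ^ (p - 1) - 1 = (int y - 1) * (\<Sum>s<p - 1. int y ^ s)"
    by (rule power_diff_1_eq)
  \<comment> \<open>\<open>y \<equiv> 1 (mod p)\<close> would lift to \<open>y ^ p ^ (p - 1) \<equiv> 1 (mod p ^ p)\<close>, forcing \<open>p - 1 dvd e\<close>.\<close>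
  moreover have "\<not> int p dvd int y - 1"
  proof
    assume "int p dvd int y - 1"
    from int_prime_power_dvd_power_sub_one[OF this, of "p - 1"]
    have "[\<gamma> ^ (p ^ (p - 1) * (e * p ^ (p - 1))) = 1] (mod p ^ p)"
      using p1 by (simp add: y_def cong_iff_dvd_diff power_mult mult.assoc flip: cong_int_iff)
    then have "p - 1 dvd e * p ^ (p - 1)"
      unfolding ord_divides ord using p1 by simp
    moreover have "coprime (p - 1) (p ^ (p - 1))"
      using coprime_diff_one_left_nat[of p] p1 by simp
    ultimately have "p - 1 dvd e"
      using coprime_dvd_mult_left_iff by blast
    with e show False using nat_dvd_not_less by blast
  qed
  then have "coprime (int p ^ p) (int y - 1)"
    using prime_imp_coprime[of "int p" "int y - 1"] p by simp
  ultimately show ?thesis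
    by (metis coprime_dvd_mult_right_iff of_nat_power power_mult y_def)
qed

lemma primroot_poly_weighted_sum_dvd:
  fixes p \<gamma> \<xi> :: nat and Q :: "int poly"
  assumes p: "prime p" and \<gamma>: "residue_primroot (p ^ p) \<gamma>" and \<xi>: "\<xi> = \<gamma> ^ p ^ (p - 1)"
    and deg: "degree Q \<le> p - 2" and low: "\<And>t. t < 2 \<Longrightarrow> coeff Q t = 0"
  shows "int (p ^ p) dvd (\<Sum>s<p - 1. int \<xi> ^ (p - 1 - s) * poly Q (int \<xi> ^ s))"
proof -
  define X where "X = int \<xi>"
  have "poly Q x = (\<Sum>t\<le>p - 2. coeff Q t * x ^ t)" for x
    unfolding poly_altdef using deg by (intro sum.mono_neutral_left) (auto simp: coeff_eq_0)
  then have "(\<Sum>s<p - 1. X ^ (p - 1 - s) * poly Q (X ^ s))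
      = (\<Sum>t\<le>p - 2. coeff Q t * (\<Sum>s<p - 1. X ^ (p - 1 - s) * (X ^ s) ^ t))"
    by (simp add: sum_distrib_left algebra_simps) (rule sum.swap)
  also have "int (p ^ p) dvd \<dots>"
  proof (rule dvd_sum)
    fix t assume t: "t \<in> {..p - 2}"
    show "int (p ^ p) dvd coeff Q t * (\<Sum>s<p - 1. X ^ (p - 1 - s) * (X ^ s) ^ t)"
    proof (cases "t < 2")
      case False
      \<comment> \<open>the weight turns the monomial \<open>x ^ t\<close> into a geometric sum of ratio \<open>X ^ (t - 1)\<close>\<close>
      have "X ^ (p - 1 - s) * (X ^ s) ^ t = X ^ (p - 1) * (X ^ (t - 1)) ^ s" if "s < p - 1" for s
      proof -
        have "p - 1 - s + s * t = p - 1 + (t - 1) * s"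
          using that False by (simp add: algebra_simps)
        then show ?thesis by (metis power_add power_mult mult.commute)
      qed
      then have "(\<Sum>s<p - 1. X ^ (p - 1 - s) * (X ^ s) ^ t) = X ^ (p - 1) * (\<Sum>s<p - 1. (X ^ (t - 1)) ^ s)"
        by (simp add: sum_distrib_left)
      moreover have "int (p ^ p) dvd (\<Sum>s<p - 1. (X ^ (t - 1)) ^ s)"
        unfolding X_def \<xi> using primroot_geometric_sum_dvd[OF p \<gamma>, of "t - 1"] False t by simp
      ultimately show ?thesis by simp
    qed (simp add: low)
  qed
  finally show ?thesis unfolding X_def .
qed

definition falling_factorial_poly :: "nat \<Rightarrow> int poly" where
  "falling_factorial_poly i = (\<Prod>r<i. [:- int r, 1:])"

lemma poly_falling_factorial_poly:
  "poly (falling_factorial_poly i) (int m) = int (fact i * (m choose i))"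
proof -
  have "real_of_int (poly (falling_factorial_poly i) (int m)) = (\<Prod>r = 0..<i. real m - real r)"
    by (simp add: falling_factorial_poly_def poly_prod atLeast0LessThan)
  also have "\<dots> = fact i * (real m gchoose i)"
    by (rule gbinomial_mult_fact[symmetric])
  also have "\<dots> = real_of_int (int (fact i * (m choose i)))"
    by (simp flip: binomial_gbinomial)
  finally show ?thesis
    by (rule of_int_eq_iff[THEN iffD1])
qed

lemma degree_falling_factorial_poly: "degree (falling_factorial_poly i) \<le> i"
  using degree_prod_sum_le[of "{..<i}" "\<lambda>r. [:- int r, 1:]"]
  by (simp add: falling_factorial_poly_def o_def)

lemma falling_factorial_poly_Suc:
  "falling_factorial_poly (Suc i) = pCons 0 (\<Prod>r<i. [:- int (Suc r), 1:])"
  unfolding falling_factorial_poly_def prod.lessThan_Suc_shift by simp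

lemma primroot_binomial_weighted_sum_dvd:
  fixes p \<gamma> \<xi> i j :: nat
  assumes p: "prime p" and \<gamma>: "residue_primroot (p ^ p) \<gamma>" and \<xi>: "\<xi> = \<gamma> ^ p ^ (p - 1)"
    and ij: "1 \<le> i" "1 \<le> j" "i + j \<le> p - 2"
  shows "p ^ p dvd (\<Sum>s<p - 1. \<xi> ^ (p - 1 - s) * ((\<xi> ^ s choose i) * (\<xi> ^ s choose j)))"
    (is "_ dvd ?N")
proof -
  define Q where "Q = falling_factorial_poly i * falling_factorial_poly j"
  have "degree Q \<le> p - 2"
    using degree_falling_factorial_poly[of i] degree_falling_factorial_poly[of j] ij
      degree_mult_le[of "falling_factorial_poly i" "falling_factorial_poly j"]
    unfolding Q_def by linarith
  moreover have "coeff Q t = 0" if "t < 2" for t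
  proof -
    obtain i' j' where "i = Suc i'" "j = Suc j'" using ij by (metis Suc_le_D One_nat_def)
    then have "\<exists>R. Q = pCons 0 (pCons 0 R)"
      by (simp add: Q_def falling_factorial_poly_Suc mult_pCons_right)
    then obtain R where "Q = pCons 0 (pCons 0 R)" ..
    with that show ?thesis by (cases t) (auto simp: coeff_pCons split: nat.splits)
  qed
  ultimately have "int (p ^ p) dvd (\<Sum>s<p - 1. int \<xi> ^ (p - 1 - s) * poly Q (int \<xi> ^ s))"
    by (intro primroot_poly_weighted_sum_dvd[OF p \<gamma> \<xi>])
  also have "\<dots> = int (fact i * fact j) * int ?N"
    by (simp add: Q_def poly_falling_factorial_poly sum_distrib_left algebra_simps flip: of_nat_power)
  finally have "int (p ^ p) dvd int (fact i * fact j) * int ?N" .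
  moreover have "\<not> p dvd fact i * fact j"
    using ij p by (auto simp: prime_dvd_mult_iff prime_dvd_fact_iff)
  then have "coprime (int (p ^ p)) (int (fact i * fact j))"
    using p prime_imp_coprime coprime_int_iff coprime_power_left_iff by blast
  ultimately show ?thesis
    using coprime_dvd_mult_right_iff of_nat_dvd_iff by blast
qed

section \<open>Multiples and finite differences in abelian groups\<close>

lemma nmul_add_left: "nmul (m + l) x = nmul m x + nmul l (x :: 'a::ab_group_add)"
  by (induction m) (simp_all add: add.assoc)

lemma nmul_add_right: "nmul m (x + y) = nmul m x + nmul m (y :: 'a::ab_group_add)"
  by (induction m) (simp_all add: algebra_simps)

lemma nmul_zero_right [simp]: "nmul m (0 :: 'a::ab_group_add) = 0"
  by (induction m) simp_all

lemma nmul_mult: "nmul (m * l) x = nmul m (nmul l (x :: 'a::ab_group_add))"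
  by (induction m) (simp_all add: nmul_add_left nmul_add_right)

lemma nmul_sum_right: "nmul m (sum f S) = (\<Sum>i\<in>S. nmul m (f i :: 'a::ab_group_add))"
  by (induction S rule: infinite_finite_induct) (simp_all add: nmul_add_right)

lemma nmul_sum_left: "nmul (sum f S) x = (\<Sum>i\<in>S. nmul (f i) (x :: 'a::ab_group_add))"
  by (induction S rule: infinite_finite_induct) (simp_all add: nmul_add_left)

lemma sum_const_eq_nmul_card: "finite S \<Longrightarrow> (\<Sum>u\<in>S. x) = nmul (card S) (x :: 'a::ab_group_add)"
  by (induction S rule: finite_induct) simp_all

lemma nmul_eq_0_if_dvd:
  fixes x :: "'a::ab_group_add"
  assumes "\<And>y :: 'a. nmul d y = 0" and "d dvd m"
  shows "nmul m x = 0"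
  using assms by (auto simp: nmul_mult mult.commute elim!: dvdE)

lemma nmul_card_eq_0: "nmul (card (UNIV :: 'a set)) (x :: 'a::{ab_group_add, finite}) = 0"
proof -
  \<comment> \<open>Translation by \<open>x\<close> permutes the group, so it does not change the sum of all elements.\<close>
  have "(\<Sum>u\<in>UNIV. u + x) = (\<Sum>u\<in>UNIV. u)"
    by (rule sum.reindex_bij_witness[of _ "\<lambda>u. u - x" "\<lambda>u. u + x"]) auto
  then show ?thesis
    by (simp add: sum.distrib sum_const_eq_nmul_card)
qed

definition delta :: "'a::ab_group_add \<Rightarrow> ('a \<Rightarrow> 'b::ab_group_add) \<Rightarrow> 'a \<Rightarrow> 'b" where
  "delta x f = (\<lambda>b. f (b + x) - f b)"

lemma fold_delta_add:
  "fold delta xs (\<lambda>b. f b + g b) = (\<lambda>b. fold delta xs f b + fold delta xs g b)"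
proof (induction xs arbitrary: f g)
  case (Cons x xs)
  have "delta x (\<lambda>b. f b + g b) = (\<lambda>b. delta x f b + delta x g b)"
    by (simp add: delta_def fun_eq_iff algebra_simps)
  then show ?case using Cons by simp
qed simp

lemma fold_delta_zero: "fold delta xs (\<lambda>b. 0) = (\<lambda>b. 0)"
  by (induction xs) (simp_all add: delta_def)

lemma delta_const: "delta x (\<lambda>b. c) = (\<lambda>b. 0)"
  by (simp add: delta_def)

lemma delta_zero: "delta 0 f = (\<lambda>b. 0)"
  by (simp add: delta_def)

lemma fold_delta_hom:
  assumes "\<And>u v. \<phi> (u + v) = \<phi> u + \<phi> v"
  shows "fold delta xs (\<lambda>b. \<phi> (f b)) = (\<lambda>b. \<phi> (fold delta xs f b))"
proof (induction xs arbitrary: f)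
  case (Cons x xs)
  have "\<phi> (u - v) = \<phi> u - \<phi> v" for u v
    using assms[of "u - v" v] by (simp add: algebra_simps)
  then have "delta x (\<lambda>b. \<phi> (f b)) = (\<lambda>b. \<phi> (delta x f b))"
    by (simp add: delta_def)
  then show ?case using Cons by simp
qed simp

lemma fold_delta_comp_affine:
  assumes "\<And>u v. \<psi> (u + v) = \<psi> u + \<psi> v"
  shows "fold delta xs (\<lambda>b. f (\<psi> b + y)) b = fold delta (map \<psi> xs) f (\<psi> b + y)"
proof (induction xs arbitrary: f b)
  case (Cons x xs)
  have "delta x (\<lambda>b. f (\<psi> b + y)) = (\<lambda>b. delta (\<psi> x) f (\<psi> b + y))"
    by (simp add: delta_def assms fun_eq_iff algebra_simps)
  then show ?case using Cons by simp
qed simp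

lemma delta_comp_diff:
  assumes "\<And>u v. \<psi> (u + v) = \<psi> u + \<psi> v"
  shows "delta y (\<lambda>b. h (\<psi> b) - h b)
    = (\<lambda>b. delta (\<psi> y - y) h (\<psi> b + y) + (delta y h (\<psi> b) - delta y h b))"
  by (simp add: delta_def assms fun_eq_iff algebra_simps)

lemma delta_funpow_zero: "(delta u ^^ n) (\<lambda>b. 0) = (\<lambda>b. 0)"
  by (induction n) (simp_all add: delta_def)

lemma newton_forward_difference:
  "h (b + nmul m u) = (\<Sum>i<Suc m. nmul (m choose i) ((delta u ^^ i) h b))"
proof (induction m arbitrary: h b)
  case 0
  then show ?case by simp
next
  case (Suc m)
  define X where "X i = (delta u ^^ i) h b" for i
  have shift: "(delta u ^^ i) (delta u h) = (delta u ^^ Suc i) h" for i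
    by (simp add: funpow_Suc_right del: funpow.simps)
  have "h (b + nmul (Suc m) u) = h (b + nmul m u) + delta u h (b + nmul m u)"
    by (simp add: delta_def algebra_simps)
  also have "\<dots> = (\<Sum>i<Suc m. nmul (m choose i) (X i)) + (\<Sum>i<Suc m. nmul (m choose i) (X (Suc i)))"
    unfolding Suc[of h] Suc[of "delta u h"] X_def shift ..
  also have "(\<Sum>i<Suc m. nmul (m choose i) (X i)) = X 0 + (\<Sum>i<Suc m. nmul (m choose Suc i) (X (Suc i)))"
  proof -
    have "(\<Sum>i<Suc m. nmul (m choose Suc i) (X (Suc i))) = (\<Sum>i<m. nmul (m choose Suc i) (X (Suc i)))"
      by (simp add: binomial_eq_0)
    then show ?thesis by (simp only: sum.lessThan_Suc_shift) simp
  qed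
  also have "X 0 + (\<Sum>i<Suc m. nmul (m choose Suc i) (X (Suc i))) + (\<Sum>i<Suc m. nmul (m choose i) (X (Suc i)))
      = (\<Sum>i<Suc (Suc m). nmul (Suc m choose i) (X i))"
    by (simp add: sum.lessThan_Suc_shift nmul_add_left sum.distrib algebra_simps del: sum.lessThan_Suc)
  finally show ?case unfolding X_def .
qed

lemma newton_forward_difference_truncated:
  assumes "\<And>x. (delta u ^^ K) h x = 0"
  shows "h (b + nmul m u) = (\<Sum>i<K. nmul (m choose i) ((delta u ^^ i) h b))"
proof -
  define f where "f i = nmul (m choose i) ((delta u ^^ i) h b)" for i
  have "f i = 0" if "K \<le> i" for i
  proof -
    have "(delta u ^^ i) h = (delta u ^^ (i - K)) ((delta u ^^ K) h)"
      using that by (metis funpow_add le_add_diff_inverse2 o_apply)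
    also have "(delta u ^^ K) h = (\<lambda>b. 0)" using assms by auto
    finally show ?thesis
      by (simp add: f_def delta_funpow_zero)
  qed
  moreover have "f i = 0" if "m < i" for i
    using that by (simp add: f_def binomial_eq_0)
  ultimately have "(\<Sum>i<Suc m. f i) = (\<Sum>i<K. f i)"
    using sum.mono_neutral_left[of "{..<Suc m + K}" "{..<Suc m}" f]
      sum.mono_neutral_right[of "{..<Suc m + K}" "{..<K}" f] by auto
  then show ?thesis
    using newton_forward_difference[of h b m u] by (simp add: f_def)
qed

section \<open>Braces and their filtration\<close>

lemma add_subgroup_add_gen: "add_subgroup (add_gen S)"
  unfolding add_gen_def add_subgroup_def by blast

lemma subset_add_gen: "S \<subseteq> add_gen S"
  unfolding add_gen_def by blast

lemma add_gen_least: "add_subgroup H \<Longrightarrow> S \<subseteq> H \<Longrightarrow> add_gen S \<subseteq> H"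
  unfolding add_gen_def by blast

locale brace =
  fixes circ :: "'a::ab_group_add \<Rightarrow> 'a \<Rightarrow> 'a"
  assumes is_brace: "is_brace circ"
begin

abbreviation star :: "'a \<Rightarrow> 'a \<Rightarrow> 'a" (infixl \<open>\<star>\<close> 70)
  where "a \<star> b \<equiv> bstar circ a b"

abbreviation A :: "nat \<Rightarrow> 'a set"
  where "A i \<equiv> bpow circ i"

lemma circ_assoc: "circ (circ a b) c = circ a (circ b c)"
  using is_brace unfolding is_brace_def by blast

lemma circ_add_right: "circ a (b + c) + a = circ a b + circ a c"
  using is_brace unfolding is_brace_def by blast

lemma zero_is_circ_identity:
  "(\<forall>a. circ 0 a = a \<and> circ a 0 = a) \<and> (\<forall>a. \<exists>b. circ a b = 0 \<and> circ b a = 0)"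
proof -
  obtain e where e: "\<forall>a. circ e a = a \<and> circ a e = a" "\<forall>a. \<exists>b. circ a b = e \<and> circ b a = e"
    using is_brace unfolding is_brace_def by blast
  have "circ e (0 + 0) + e = circ e 0 + circ e 0" by (rule circ_add_right)
  then have "e = 0" using e by simp
  with e show ?thesis by simp
qed

lemma circ_diff_right: "circ a (b - c) = circ a b - circ a c + a"
  using circ_add_right[of a "b - c" c] by (simp add: algebra_simps)

lemma circ_zero_left [simp]: "circ 0 a = a" and circ_zero_right [simp]: "circ a 0 = a"
  using zero_is_circ_identity by auto

lemma circ_inverse_ex: "\<exists>b. circ a b = 0"
  using zero_is_circ_identity by auto

lemma star_add_right: "a \<star> (b + c) = a \<star> b + a \<star> c"
  using circ_add_right[of a b c] unfolding bstar_def by (simp add: algebra_simps)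

lemma star_zero_left [simp]: "0 \<star> b = 0"
  unfolding bstar_def by simp

lemma circ_eq_add_star: "circ a b = a + b + a \<star> b"
  unfolding bstar_def by simp

lemma star_circ_left: "circ a b \<star> c = a \<star> (b \<star> c) + a \<star> c + b \<star> c"
proof -
  have "circ a (b \<star> c) = circ a (circ b c) - circ a b - circ a c + a + a"
    using circ_add_right[of a "circ b c - b - c" c] circ_add_right[of a "circ b c - b" b]
    unfolding bstar_def by (simp add: algebra_simps)
  then show ?thesis
    unfolding bstar_def circ_assoc by (simp add: algebra_simps)
qed

lemma add_eq_circ_add_star:
  assumes "circ x x' = 0"
  shows "b + x = circ x (b + x' \<star> b)"
proof -
  have "b + x' \<star> b = circ x' b - x'" by (simp add: circ_eq_add_star)
  then have "circ x (b + x' \<star> b) = circ x (circ x' b) - circ x x' + x"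
    by (simp add: circ_diff_right)
  then show ?thesis by (simp add: assms flip: circ_assoc)
qed

lemma delta_star_left:
  assumes "circ x x' = 0"
  shows "delta x (\<lambda>a. a \<star> w)
    = (\<lambda>b. x \<star> w + ((b + x' \<star> b) \<star> w - b \<star> w) + x \<star> ((b + x' \<star> b) \<star> w))"
  using add_eq_circ_add_star[OF assms]
  by (simp add: delta_def fun_eq_iff star_circ_left algebra_simps)

lemma add_subgroup_bpow: "add_subgroup (A i)"
proof -
  have "add_subgroup (UNIV :: 'a set)" by (simp add: add_subgroup_def)
  then show ?thesis
    by (cases "(circ, i)" rule: bpow.cases) (simp_all add: add_subgroup_add_gen)
qed

lemma zero_mem_bpow [simp]: "0 \<in> A i"
  and add_mem_bpow: "x \<in> A i \<Longrightarrow> y \<in> A i \<Longrightarrow> x + y \<in> A i"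
  and minus_mem_bpow: "x \<in> A i \<Longrightarrow> - x \<in> A i"
  using add_subgroup_bpow[of i] unfolding add_subgroup_def by blast+

lemma diff_mem_bpow: "x \<in> A i \<Longrightarrow> y \<in> A i \<Longrightarrow> x - y \<in> A i"
  using add_mem_bpow[of x i "- y"] minus_mem_bpow by simp

lemma star_mem_bpow_add:
  assumes "1 \<le> i" "1 \<le> j" "x \<in> A i" "y \<in> A j"
  shows "x \<star> y \<in> A (i + j)"
proof -
  define m where "m = i + j - 2"
  have m: "i + j = Suc (Suc m)" and i: "i \<in> {1..Suc m}" and j: "Suc (Suc m) - i = j"
    using assms by (simp_all add: m_def)
  have "x \<star> y \<in> bprod circ (A i) (A (Suc (Suc m) - i))"
    unfolding bprod_def j using assms by (blast intro: subset_add_gen[THEN subsetD])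
  then have "x \<star> y \<in> (\<Union>l\<in>{1..Suc m}. bprod circ (A l) (A (Suc (Suc m) - l)))"
    using i by blast
  then have "x \<star> y \<in> A (Suc (Suc m))"
    unfolding bpow.simps(3) by (rule subset_add_gen[THEN subsetD])
  then show ?thesis
    by (simp only: m)
qed

lemma bpow_Suc_Suc_least:
  assumes "add_subgroup H"
    and "\<And>i j x y. 1 \<le> i \<Longrightarrow> 1 \<le> j \<Longrightarrow> i + j = Suc (Suc m) \<Longrightarrow> x \<in> A i \<Longrightarrow> y \<in> A j \<Longrightarrow> x \<star> y \<in> H"
  shows "A (Suc (Suc m)) \<subseteq> H"
  unfolding bpow.simps(3) bprod_def
proof (intro add_gen_least[OF assms(1)] UN_least)
  fix l assume "l \<in> {1..Suc m}"
  then show "{x \<star> y |x y. x \<in> A l \<and> y \<in> A (Suc (Suc m) - l)} \<subseteq> H"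
    using assms(2)[of l "Suc (Suc m) - l"] by auto
qed

lemma bpow_Suc_subset: "A (Suc m) \<subseteq> A m"
proof (induction m rule: less_induct)
  case (less m)
  show ?case
  proof (cases "m \<le> 1")
    case False
    define m' where "m' = m - 2"
    have m: "m = Suc (Suc m')" using False by (simp add: m'_def)
    have "x \<star> y \<in> A m" if "1 \<le> i" "1 \<le> j" "i + j = Suc m" "x \<in> A i" "y \<in> A j" for i j x y
    proof (cases "j = 1")
      case True
      then have "x \<in> A (Suc m')" using that less.IH[of "Suc m'"] m by auto
      then show ?thesis using star_mem_bpow_add[of "Suc m'" 1 x y] that True m by simp
    next
      case False
      then have "y \<in> A (j - 1)" using that less.IH[of "j - 1"] by (simp add: subset_iff)
      then show ?thesis using star_mem_bpow_add[of i "j - 1" x y] that False by simp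
    qed
    then show ?thesis
      unfolding m by (intro bpow_Suc_Suc_least add_subgroup_bpow) (auto simp: m)
  qed (cases m; simp)
qed

lemma bpow_antimono: "i \<le> j \<Longrightarrow> A j \<subseteq> A i"
proof (induction j rule: dec_induct)
  case (step n)
  show ?case using bpow_Suc_subset[of n] step.IH by (rule order.trans)
qed simp

lemma star_mem_bpow:
  assumes "x \<in> A i" "y \<in> A j"
  shows "x \<star> y \<in> A (i + j)"
proof -
  have "x \<in> A (max i 1)" using assms(1) by (cases "i = 0") (simp_all add: max_def)
  moreover have "y \<in> A (max j 1)" using assms(2) by (cases "j = 0") (simp_all add: max_def)
  ultimately have "x \<star> y \<in> A (max i 1 + max j 1)"
    by (intro star_mem_bpow_add) auto
  moreover have "i + j \<le> max i 1 + max j 1" by simp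
  ultimately show ?thesis
    using bpow_antimono by blast
qed

lemma inverse_mem_bpow:
  assumes "circ x x' = 0" "x \<in> A t"
  shows "x' \<in> A t"
proof -
  have "x \<star> x' \<in> A t"
    using star_mem_bpow[OF assms(2), of x' 0] by simp
  then have "- x - x \<star> x' \<in> A t"
    using assms(2) by (intro diff_mem_bpow minus_mem_bpow)
  moreover have "- x - x \<star> x' = (x + x' + x \<star> x') - x - x \<star> x'"
    using assms(1) by (simp only: circ_eq_add_star) simp
  also have "\<dots> = x'"
    by simp
  ultimately show ?thesis by simp
qed

end

section \<open>Finite differences of \<open>a \<mapsto> a \<star> w\<close>\<close>

definition weight :: "('a \<times> nat) list \<Rightarrow> nat" where
  "weight zs = sum_list (map snd zs)"

lemma weight_simps [simp]:
  "weight [] = 0"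
  "weight ((x, t) # zs) = t + weight zs"
  "weight (zs @ ys) = weight zs + weight ys"
  "weight (map (apfst \<psi>) zs) = weight zs"
  by (simp_all add: weight_def o_def)

context brace
begin

lemma add_raising_mem_bpow:
  assumes "\<And>u b. b \<in> A u \<Longrightarrow> \<nu> b \<in> A (t + u)" and "b \<in> A u"
  shows "b + \<nu> b \<in> A u"
  using assms bpow_antimono[of u "t + u"] by (auto intro: add_mem_bpow)

definition graded :: "('a \<times> nat) list \<Rightarrow> bool" where
  "graded zs \<longleftrightarrow> (\<forall>(x, t) \<in> set zs. 1 \<le> t \<and> x \<in> A t)"

lemma graded_simps [simp]:
  "graded []"
  "graded ((x, t) # zs) \<longleftrightarrow> 1 \<le> t \<and> x \<in> A t \<and> graded zs"
  "graded (zs @ ys) \<longleftrightarrow> graded zs \<and> graded ys"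
  by (auto simp: graded_def)

lemma graded_map_apfst:
  assumes "graded zs" "\<And>u b. b \<in> A u \<Longrightarrow> \<psi> b \<in> A u"
  shows "graded (map (apfst \<psi>) zs)"
  using assms unfolding graded_def by (auto simp: case_prod_beta)

text \<open>By \<open>delta_comp_diff\<close>, the difference in direction \<open>y\<close> of \<open>b \<mapsto> h (b + \<nu> b) - h b\<close> is
  a difference of \<open>h\<close> in direction \<open>\<nu> y\<close>, of degree \<open>t + u\<close>, at a shifted point, plus the same
  twisted expression for \<open>delta y h\<close>. Unfolding this along \<open>ys\<close> leaves differences of \<open>g\<close> along
  lists no longer than \<open>ys\<close>, except for a last one that appends a direction of degree \<open>t + 1\<close>.\<close>
lemma fold_delta_twisted_mem:
  fixes g \<nu> :: "'a \<Rightarrow> 'a"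
  assumes \<nu>_add: "\<And>u v. \<nu> (u + v) = \<nu> u + \<nu> v"
    and \<nu>_mem: "\<And>u b. b \<in> A u \<Longrightarrow> \<nu> b \<in> A (t + u)"
    and graded: "graded ys"
    and shorter: "\<And>zs b. graded zs \<Longrightarrow> length zs \<le> length ys
      \<Longrightarrow> fold delta (map fst zs) g b \<in> A (s + weight zs)"
    and extended: "\<And>v b. v \<in> A (Suc t)
      \<Longrightarrow> fold delta (map fst ys @ [v]) g b \<in> A (s + weight ys + Suc t)"
    and split: "zs @ ys' = ys"
  shows "fold delta (map fst ys')
      (\<lambda>b. fold delta (map fst zs) g (b + \<nu> b) - fold delta (map fst zs) g b) a
    \<in> A (s + t + weight zs + weight ys')"
  using split
proof (induction ys' arbitrary: zs a)
  case Nil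
  have "\<nu> a \<in> A (Suc t)"
    using \<nu>_mem[of a 1] by simp
  then have "fold delta (map fst ys @ [\<nu> a]) g a \<in> A (s + weight ys + Suc t)"
    by (rule extended)
  moreover have "fold delta (map fst ys @ [\<nu> a]) g a
      = fold delta (map fst zs) g (a + \<nu> a) - fold delta (map fst zs) g a"
    using Nil by (simp add: delta_def)
  ultimately show ?case
    using Nil bpow_antimono[of "s + t + weight zs" "s + weight ys + Suc t"] by auto
next
  case (Cons yu ys')
  obtain y u where yu: "yu = (y, u)" by fastforce
  have "graded zs" "1 \<le> u" "y \<in> A u" "graded ys'"
    using graded Cons.prems yu by auto
  define \<psi> where "\<psi> b = b + \<nu> b" for b
  define h where "h = fold delta (map fst zs) g"
  have \<psi>_add: "\<psi> (u + v) = \<psi> u + \<psi> v" for u v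
    by (simp add: \<psi>_def \<nu>_add)
  have \<psi>_mem: "\<psi> b \<in> A u" if "b \<in> A u" for u b
    unfolding \<psi>_def using \<nu>_mem that by (rule add_raising_mem_bpow)
  define W where "W = zs @ [(\<nu> y, t + u)] @ map (apfst \<psi>) ys'"
  have "fold delta (map fst ys') (\<lambda>b. delta (\<nu> y) h (\<psi> b + y)) a = fold delta (map fst W) g (\<psi> a + y)"
    by (simp add: fold_delta_comp_affine[OF \<psi>_add] W_def h_def o_def)
  also have "\<dots> \<in> A (s + weight W)"
    using \<open>graded zs\<close> \<open>graded ys'\<close> \<open>1 \<le> u\<close> \<nu>_mem[OF \<open>y \<in> A u\<close>] \<psi>_mem Cons.prems yu
    by (intro shorter) (auto simp: W_def intro: graded_map_apfst)
  finally have "fold delta (map fst ys') (\<lambda>b. delta (\<nu> y) h (\<psi> b + y)) a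
      \<in> A (s + t + weight zs + weight (yu # ys'))"
    by (simp add: W_def yu algebra_simps)
  moreover have "fold delta (map fst ys') (\<lambda>b. delta y h (\<psi> b) - delta y h b) a
      \<in> A (s + t + weight zs + weight (yu # ys'))"
    using Cons.IH[of "zs @ [yu]"] Cons.prems by (simp add: h_def yu \<psi>_def add.assoc)
  moreover have "delta y (\<lambda>b. h (\<psi> b) - h b)
      = (\<lambda>b. delta (\<nu> y) h (\<psi> b + y) + (delta y h (\<psi> b) - delta y h b))"
    using delta_comp_diff[OF \<psi>_add] by (simp add: \<psi>_def)
  ultimately show ?case
    by (simp add: yu h_def \<psi>_def fold_delta_add add_mem_bpow)
qed

lemma fold_delta_star_Cons_mem:
  assumes w: "w \<in> A s" and t: "1 \<le> t" "x \<in> A t" and "graded ys"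
    and shorter: "\<And>zs b. graded zs \<Longrightarrow> length zs \<le> length ys
      \<Longrightarrow> fold delta (map fst zs) (\<lambda>a. a \<star> w) b \<in> A (s + weight zs)"
    and extended: "\<And>v b. v \<in> A (Suc t)
      \<Longrightarrow> fold delta (map fst ys @ [v]) (\<lambda>a. a \<star> w) b \<in> A (s + weight ys + Suc t)"
  shows "fold delta (x # map fst ys) (\<lambda>a. a \<star> w) b \<in> A (s + t + weight ys)"
proof -
  define g where "g = (\<lambda>a. a \<star> w)"
  obtain x' where x': "circ x x' = 0" using circ_inverse_ex by blast
  have x'_mem: "x' \<star> b \<in> A (t + u)" if "b \<in> A u" for b u
    using star_mem_bpow[OF inverse_mem_bpow[OF x' t(2)] that] .
  define \<psi> where "\<psi> b = b + x' \<star> b" for b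
  have \<psi>_add: "\<psi> (u + v) = \<psi> u + \<psi> v" for u v
    by (simp add: \<psi>_def star_add_right)
  have \<psi>_mem: "\<psi> b \<in> A u" if "b \<in> A u" for b u
    unfolding \<psi>_def using x'_mem that by (rule add_raising_mem_bpow)
  have "fold delta (map fst ys) (\<lambda>b. x \<star> w) b \<in> A (s + t + weight ys)"
  proof (cases ys)
    case Nil
    then show ?thesis using star_mem_bpow[OF t(2) w] by (simp add: add.commute)
  qed (simp add: delta_const fold_delta_zero)
  moreover have "fold delta (map fst ys) (\<lambda>b. g (\<psi> b) - g b) b \<in> A (s + t + weight ys)"
    using fold_delta_twisted_mem[where g=g and zs="[]" and ys'=ys,
        OF star_add_right x'_mem \<open>graded ys\<close> shorter[folded g_def] extended[folded g_def]]
    by (simp add: \<psi>_def)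
  moreover have "fold delta (map fst ys) (\<lambda>b. x \<star> g (\<psi> b)) b \<in> A (s + t + weight ys)"
  proof -
    have "fold delta (map fst ys) (\<lambda>b. x \<star> g (\<psi> b)) b
        = x \<star> fold delta (map fst (map (apfst \<psi>) ys)) g (\<psi> b + 0)"
      using fold_delta_hom[where \<phi>="bstar circ x" and f="\<lambda>b. g (\<psi> b + 0)"] star_add_right
        fold_delta_comp_affine[OF \<psi>_add, of "map fst ys" g 0 b]
      by (simp add: o_def)
    moreover have "fold delta (map fst (map (apfst \<psi>) ys)) g (\<psi> b + 0)
        \<in> A (s + weight (map (apfst \<psi>) ys))"
      using \<open>graded ys\<close> \<psi>_mem by (intro shorter[unfolded g_def[symmetric]] graded_map_apfst) auto
    ultimately have "fold delta (map fst ys) (\<lambda>b. x \<star> g (\<psi> b)) b \<in> A (t + (s + weight ys))"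
      using star_mem_bpow[OF t(2)] by simp
    then show ?thesis by (simp add: algebra_simps)
  qed
  moreover have "fold delta (x # map fst ys) g b
      = fold delta (map fst ys) (\<lambda>b. x \<star> w) b + fold delta (map fst ys) (\<lambda>b. g (\<psi> b) - g b) b
        + fold delta (map fst ys) (\<lambda>b. x \<star> g (\<psi> b)) b"
    using delta_star_left[OF x', of w] by (simp add: g_def \<psi>_def fold_delta_add)
  ultimately show ?thesis
    by (simp add: g_def add_mem_bpow)
qed

end

locale nilpotent_brace = brace +
  fixes k :: nat
  assumes bpow_nilpotent: "bpow circ k = {0}"
begin

lemma bpow_eq_zero: "k \<le> m \<Longrightarrow> A m = {0}"
  using bpow_antimono[of k m] bpow_nilpotent zero_mem_bpow[of m] by blast

text \<open>Termination measure for the induction below: a direction of degree \<open>t\<close> contributes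
  \<open>k - t\<close>, and the expansion of \<open>fold_delta_star_Cons_mem\<close> only trades a direction of degree
  \<open>t < k\<close> for one of degree \<open>t + 1\<close> or shortens the list.\<close>
definition deficiency :: "('a \<times> nat) list \<Rightarrow> nat" where
  "deficiency zs = sum_list (map (\<lambda>z. k - snd z) zs)"

lemma fold_delta_star_mem:
  assumes w: "w \<in> A s" and "graded zs"
  shows "fold delta (map fst zs) (\<lambda>a. a \<star> w) b \<in> A (s + weight zs)"
  using assms(2)
proof (induction zs arbitrary: b rule: wf_induct_rule[OF wf_measures[of "[length, deficiency]"]])
  case (1 zs)
  show ?case
  proof (cases zs)
    case Nil
    then show ?thesis using star_mem_bpow[OF _ w, of b 0] by simp
  next
    case (Cons z ys)
    obtain x t where z: "z = (x, t)" by fastforce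
    have t: "1 \<le> t" "x \<in> A t" and "graded ys"
      using "1.prems" Cons z by auto
    show ?thesis
    proof (cases "k \<le> t")
      case True
      then have "x = 0" using t bpow_eq_zero by blast
      then show ?thesis using Cons z by (simp add: delta_zero fold_delta_zero)
    next
      case False
      have "fold delta (x # map fst ys) (\<lambda>a. a \<star> w) b \<in> A (s + t + weight ys)"
      proof (rule fold_delta_star_Cons_mem[OF w t \<open>graded ys\<close>])
        fix zs' b' assume "graded zs'" "length zs' \<le> length ys"
        then show "fold delta (map fst zs') (\<lambda>a. a \<star> w) b' \<in> A (s + weight zs')"
          using "1.IH"[of zs'] Cons by simp
      next
        fix v b' assume "v \<in> A (Suc t)"
        moreover have "deficiency (ys @ [(v, Suc t)]) < deficiency zs"
          using False Cons z by (simp add: deficiency_def)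
        ultimately show "fold delta (map fst ys @ [v]) (\<lambda>a. a \<star> w) b' \<in> A (s + weight ys + Suc t)"
          using "1.IH"[of "ys @ [(v, Suc t)]"] \<open>graded ys\<close> Cons by (simp add: add.assoc)
      qed
      then show ?thesis using Cons z by (simp add: add.assoc)
    qed
  qed
qed

lemma fold_delta_star_eq_0:
  assumes "k \<le> length xs"
  shows "fold delta xs (\<lambda>a. a \<star> c) b = 0"
proof -
  define zs where "zs = map (\<lambda>x. (x, 1 :: nat)) xs"
  have "fold delta (map fst zs) (\<lambda>a. a \<star> c) b \<in> A (1 + weight zs)"
    by (intro fold_delta_star_mem) (auto simp: graded_def zs_def)
  moreover have "map fst zs = xs" "weight zs = length xs"
    by (simp_all add: zs_def weight_def o_def sum_list_triv)
  ultimately show ?thesis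
    using bpow_eq_zero[of "1 + length xs"] assms by simp
qed

definition mixed_delta :: "'a \<Rightarrow> 'a \<Rightarrow> 'a \<Rightarrow> nat \<Rightarrow> nat \<Rightarrow> 'a" where
  "mixed_delta a b c i j = fold delta (replicate i a @ replicate j b) (\<lambda>x. x \<star> c) 0"

lemma mixed_delta_eq_0: "k \<le> i + j \<Longrightarrow> mixed_delta a b c i j = 0"
  unfolding mixed_delta_def by (rule fold_delta_star_eq_0) simp

lemma star_nmul_add_expansion:
  "(nmul m a + nmul l b) \<star> c
    = (\<Sum>i<k. \<Sum>j<k. nmul ((m choose i) * (l choose j)) (mixed_delta a b c i j))"
proof -
  define g where "g = (\<lambda>x. x \<star> c)"
  have mixed: "(delta b ^^ j) ((delta a ^^ i) g) = fold delta (replicate i a @ replicate j b) g" for i j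
    by (simp add: fold_replicate)
  have "(delta a ^^ k) g x = 0" for x
    using fold_delta_star_eq_0[of "replicate k a"] by (simp add: g_def fold_replicate)
  then have "g (nmul l b + nmul m a) = (\<Sum>i<k. nmul (m choose i) ((delta a ^^ i) g (nmul l b)))"
    by (rule newton_forward_difference_truncated)
  also have "\<dots> = (\<Sum>i<k. nmul (m choose i) (\<Sum>j<k. nmul (l choose j) (mixed_delta a b c i j)))"
  proof (rule sum.cong[OF refl])
    fix i
    have "(delta b ^^ k) ((delta a ^^ i) g) x = 0" for x
      using fold_delta_star_eq_0[of "replicate i a @ replicate k b"] by (simp add: g_def fold_replicate)
    then have "(delta a ^^ i) g (0 + nmul l b)
        = (\<Sum>j<k. nmul (l choose j) ((delta b ^^ j) ((delta a ^^ i) g) 0))"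
      by (rule newton_forward_difference_truncated)
    then show "nmul (m choose i) ((delta a ^^ i) g (nmul l b))
        = nmul (m choose i) (\<Sum>j<k. nmul (l choose j) (mixed_delta a b c i j))"
      by (simp add: mixed mixed_delta_def g_def)
  qed
  finally show ?thesis
    by (simp add: g_def add.commute nmul_sum_right nmul_mult)
qed

lemma star_nmul_add_left:
  "nmul M (a + b) \<star> c = nmul M a \<star> c + nmul M b \<star> c
    + (\<Sum>i\<in>{1..<k}. \<Sum>j\<in>{1..<k}. nmul ((M choose i) * (M choose j)) (mixed_delta a b c i j))"
proof (cases "k = 0")
  case True
  then have "x = 0" for x :: 'a
    using bpow_eq_zero[of 0] by auto
  then show ?thesis by metis
next
  case False
  have split: "(\<Sum>i<k. f i) = f 0 + (\<Sum>i\<in>{1..<k}. f i)" for f :: "nat \<Rightarrow> 'a"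
    using False by (simp add: lessThan_atLeast0 sum.atLeast_Suc_lessThan)
  have "nmul M a \<star> c = (\<Sum>i<k. nmul (M choose i) (mixed_delta a b c i 0))"
    using star_nmul_add_expansion[of M a 0 b c] by (simp add: split binomial_eq_0)
  moreover have "nmul M b \<star> c = (\<Sum>j<k. nmul (M choose j) (mixed_delta a b c 0 j))"
    using star_nmul_add_expansion[of 0 a M b c] by (simp add: split binomial_eq_0)
  moreover have "mixed_delta a b c 0 0 = 0"
    by (simp add: mixed_delta_def)
  ultimately show ?thesis
    using star_nmul_add_expansion[of M a M b c]
    by (simp add: nmul_add_right split sum.distrib algebra_simps)
qed

lemma bdot_add_left_expansion:
  "bdot circ p \<xi> (a + b) c = bdot circ p \<xi> a c + bdot circ p \<xi> b c
    + (\<Sum>i\<in>{1..<k}. \<Sum>j\<in>{1..<k}.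
        nmul (\<Sum>s = 0..p - 2. \<xi> ^ (p - 1 - s) * ((\<xi> ^ s choose i) * (\<xi> ^ s choose j)))
          (mixed_delta a b c i j))"
proof -
  have "(\<Sum>s = 0..p - 2. nmul (\<xi> ^ (p - 1 - s)) (\<Sum>i\<in>{1..<k}. \<Sum>j\<in>{1..<k}.
          nmul ((\<xi> ^ s choose i) * (\<xi> ^ s choose j)) (mixed_delta a b c i j)))
      = (\<Sum>i\<in>{1..<k}. \<Sum>j\<in>{1..<k}. \<Sum>s = 0..p - 2.
          nmul (\<xi> ^ (p - 1 - s) * ((\<xi> ^ s choose i) * (\<xi> ^ s choose j))) (mixed_delta a b c i j))"
    by (simp add: nmul_sum_right nmul_mult sum.swap[of _ "{0..p - 2}"])
  then show ?thesis
    unfolding bdot_def star_nmul_add_left by (simp add: nmul_add_right sum.distrib nmul_sum_left)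
qed

lemma bdot_additive_left:
  assumes p: "prime p" and "k < p"
    and \<gamma>: "residue_primroot (p ^ p) \<gamma>" and \<xi>: "\<xi> = \<gamma> ^ p ^ (p - 1)"
    and exponent: "\<And>x :: 'a. nmul (p ^ p) x = 0"
  shows "bdot circ p \<xi> (a + b) c = bdot circ p \<xi> a c + bdot circ p \<xi> b c"
proof -
  have "nmul (\<Sum>s = 0..p - 2. \<xi> ^ (p - 1 - s) * ((\<xi> ^ s choose i) * (\<xi> ^ s choose j)))
      (mixed_delta a b c i j) = 0" (is "nmul ?N _ = 0") if "i \<in> {1..<k}" "j \<in> {1..<k}" for i j
  proof (cases "k \<le> i + j")
    case False
    have "p ^ p dvd (\<Sum>s<p - 1. \<xi> ^ (p - 1 - s) * ((\<xi> ^ s choose i) * (\<xi> ^ s choose j)))"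
      using that False \<open>k < p\<close> by (intro primroot_binomial_weighted_sum_dvd[OF p \<gamma> \<xi>]) auto
    also have "\<dots> = ?N"
      using prime_ge_2_nat[OF p] by (intro sum.cong) auto
    finally show ?thesis
      by (rule nmul_eq_0_if_dvd[OF exponent])
  qed (simp add: mixed_delta_eq_0)
  then show ?thesis
    by (simp add: bdot_add_left_expansion)
qed

end

theorem proposition4:
  fixes circ :: "'a::{ab_group_add, finite} \<Rightarrow> 'a \<Rightarrow> 'a"
    and p n k \<gamma> \<xi> :: nat
  assumes "prime p" and "n + 1 < p" and "k < p"
    and "is_brace circ" and "card (UNIV :: 'a set) = p ^ n"
    and "strongly_nilpotent circ" and "nilpotency_index circ k"
    and "residue_primroot (p ^ p) \<gamma>"
    and "\<xi> = \<gamma> ^ (p ^ (p - 1))"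
  shows "\<forall>a b c. bdot circ p \<xi> (a + b) c = bdot circ p \<xi> a c + bdot circ p \<xi> b c
           \<and> bdot circ p \<xi> a (b + c) = bdot circ p \<xi> a b + bdot circ p \<xi> a c"
proof -
  interpret nilpotent_brace circ k
    using assms(4,7) by unfold_locales (simp_all add: nilpotency_index_def)
  have "nmul (p ^ p) x = 0" for x :: 'a
    using assms(2,5) by (intro nmul_eq_0_if_dvd[OF nmul_card_eq_0]) (simp add: le_imp_power_dvd)
  then have "bdot circ p \<xi> (a + b) c = bdot circ p \<xi> a c + bdot circ p \<xi> b c" for a b c
    using assms(1,3,8,9) by (intro bdot_additive_left) auto
  moreover have "bdot circ p \<xi> a (b + c) = bdot circ p \<xi> a b + bdot circ p \<xi> a c" for a b c
    by (simp add: bdot_def star_add_right nmul_add_right sum.distrib)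
  ultimately show ?thesis by blast
qed

end
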